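(* For $\mathcal S=\{000,001,010,111\}\subseteq\{0,1\}^3$, every 3SS scheme with domain $\mathcal S$ satisfies $|\{\mathbf w:\Pr[\psi(\mathbf x,R)=\mathbf w]>0\}|\ge 6$ for some $\mathbf x\in\mathcal S$ (indeed for $\mathbf x=001$); in particular $\rho(\mathcal S)\ge\log_2 6$.
   Context: Binary triples $(x_1,x_2,x_3)\in\{0,1\}^3$ are written $x_1x_2x_3$. Let $\mathcal S\subseteq\{0,1\}^3$ be nonempty. A distribution scheme with domain $\mathcal S$ is a pair $(P_R,\psi)$ where $P_R$ is a probability distribution on a finite set $\mathcal R$ and $\psi:\mathcal S\times\mathcal R\to\mathcal W_{12}\times\mathcal W_{23}\times\mathcal W_{31}$ for finite share alphabets. Given $\mathbf x=(x_1,x_2,x_3)\in\mathcal S$, the shares are $(W_{12},W_{23},W_{31})=\psi(\mathbf x,R)$, $R\sim P_R$. Party $P_1$ sees $V_1=(W_{12},W_{31})$, $P_2$ sees $V_2=(W_{23},W_{12})$, $P_3$ sees $V_3=(W_{31},W_{23})$. It is a 3SS scheme if (Correctness) for each $i$ there is a function $\phi_i$ with $\Pr[\phi_i(V_i)=x_i]=1$ for every $\mathbf x\in\mathcal S$, and (Perfect privacy) for each $i$ and all $\mathbf x,\mathbf x'\in\mathcal S$ with $x_i=x'_i$, $V_i$ has the same distribution under secret $\mathbf x$ as under $\mathbf x'$. The randomness complexity $\rho(\mathcal S)$ is the minimum of $\log_2|\mathcal R|$ over all 3SS schemes with domain $\mathcal S$. *)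

theory Defs
  imports "HOL-Probability.Probability_Mass_Function"
begin

text \<open>Bits are encoded as booleans: False = 0, True = 1. A binary triple
  x1 x2 x3 is the tuple (x1, x2, x3).\<close>

type_synonym triple = "bool \<times> bool \<times> bool"

definition bit1 :: "triple \<Rightarrow> bool" where "bit1 x = fst x"
definition bit2 :: "triple \<Rightarrow> bool" where "bit2 x = fst (snd x)"
definition bit3 :: "triple \<Rightarrow> bool" where "bit3 x = snd (snd x)"

definition view1 :: "'a \<times> 'b \<times> 'c \<Rightarrow> 'a \<times> 'c" where
  "view1 w = (case w of (w12, w23, w31) \<Rightarrow> (w12, w31))"
definition view2 :: "'a \<times> 'b \<times> 'c \<Rightarrow> 'b \<times> 'a" where
  "view2 w = (case w of (w12, w23, w31) \<Rightarrow> (w23, w12))"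
definition view3 :: "'a \<times> 'b \<times> 'c \<Rightarrow> 'c \<times> 'b" where
  "view3 w = (case w of (w12, w23, w31) \<Rightarrow> (w31, w23))"

definition is_3SS ::
  "triple set \<Rightarrow> ('r::finite) pmf \<Rightarrow>
   (triple \<Rightarrow> 'r \<Rightarrow> ('w12::finite) \<times> ('w23::finite) \<times> ('w31::finite)) \<Rightarrow> bool" where
  "is_3SS S P psi \<longleftrightarrow>
     \<comment> \<open>Correctness\<close>
     (\<exists>phi1. \<forall>x\<in>S. \<forall>r\<in>set_pmf P. phi1 (view1 (psi x r)) = bit1 x) \<and>
     (\<exists>phi2. \<forall>x\<in>S. \<forall>r\<in>set_pmf P. phi2 (view2 (psi x r)) = bit2 x) \<and>
     (\<exists>phi3. \<forall>x\<in>S. \<forall>r\<in>set_pmf P. phi3 (view3 (psi x r)) = bit3 x) \<and>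
     \<comment> \<open>Perfect privacy\<close>
     (\<forall>x\<in>S. \<forall>x'\<in>S. bit1 x = bit1 x' \<longrightarrow>
        map_pmf (\<lambda>r. view1 (psi x r)) P = map_pmf (\<lambda>r. view1 (psi x' r)) P) \<and>
     (\<forall>x\<in>S. \<forall>x'\<in>S. bit2 x = bit2 x' \<longrightarrow>
        map_pmf (\<lambda>r. view2 (psi x r)) P = map_pmf (\<lambda>r. view2 (psi x' r)) P) \<and>
     (\<forall>x\<in>S. \<forall>x'\<in>S. bit3 x = bit3 x' \<longrightarrow>
        map_pmf (\<lambda>r. view3 (psi x r)) P = map_pmf (\<lambda>r. view3 (psi x' r)) P)"

definition share_support ::
  "'r pmf \<Rightarrow> (triple \<Rightarrow> 'r \<Rightarrow> 'w) \<Rightarrow> triple \<Rightarrow> 'w set" where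
  "share_support P psi x = {w. measure_pmf.prob P {r. psi x r = w} > 0}"

definition S_ex :: "triple set" where
  "S_ex = {(False, False, False), (False, False, True), (False, True, False), (True, True, True)}"

end

theory Submission
  imports Defs
begin

text \<open>Write \<open>T\<^sub>x\<close> for the support of the share vector under secret \<open>x\<close>. Privacy
  against a party makes the sets of its views coincide for secrets that agree in its bit,
  and correctness makes them disjoint for secrets that differ in it. Chasing a share vector
  of \<open>T\<^sub>0\<^sub>0\<^sub>1\<close> through these constraints (with \<open>T\<^sub>0\<^sub>0\<^sub>0\<close>, \<open>T\<^sub>0\<^sub>1\<^sub>0\<close>, \<open>T\<^sub>1\<^sub>1\<^sub>1\<close>) yields three
  different values of \<open>W\<^sub>1\<^sub>2\<close> in \<open>T\<^sub>0\<^sub>0\<^sub>1\<close>, each occurring with two different values of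
  \<open>W\<^sub>2\<^sub>3\<close>. So \<open>|T\<^sub>0\<^sub>0\<^sub>1| \<ge> 6\<close>, and \<open>|R| \<ge> |T\<^sub>0\<^sub>0\<^sub>1|\<close>.\<close>

lemma view1_simp [simp]: "view1 (a, b, c) = (a, c)"
  and view2_simp [simp]: "view2 (a, b, c) = (b, a)"
  and view3_simp [simp]: "view3 (a, b, c) = (c, b)"
  by (simp_all add: view1_def view2_def view3_def)

lemma mem_view1_image: "(a, c) \<in> view1 ` T \<longleftrightarrow> (\<exists>b. (a, b, c) \<in> T)"
  by force

lemma mem_view2_image: "(b, a) \<in> view2 ` T \<longleftrightarrow> (\<exists>c. (a, b, c) \<in> T)"
  by force

lemma mem_view3_image: "(c, b) \<in> view3 ` T \<longleftrightarrow> (\<exists>a. (a, b, c) \<in> T)"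
  by force

text \<open>\<open>T0, T1, T2, T3\<close> play the roles of the supports for the secrets 000, 001, 010, 111.\<close>

lemma card_ge_6_of_view_constraints:
  fixes T0 T1 T2 T3 :: "('a \<times> 'b \<times> 'c) set"
  assumes v1: "view1 ` T0 = view1 ` T1" "view1 ` T2 = view1 ` T1"
      "view1 ` T3 \<inter> view1 ` T1 = {}"
    and v2: "view2 ` T0 = view2 ` T1" "view2 ` T3 = view2 ` T2"
      "view2 ` T0 \<inter> view2 ` T2 = {}"
    and v3: "view3 ` T0 = view3 ` T2" "view3 ` T1 = view3 ` T3"
      "view3 ` T0 \<inter> view3 ` T1 = {}"
    and "T1 \<noteq> {}" and "finite T1"
  shows "card T1 \<ge> 6"
proof -
  have T0_T1: "\<exists>b'. (a, b', c) \<in> T1" "\<exists>c'. (a, b, c') \<in> T1" "\<exists>a'. (a', b, c) \<in> T2"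
    if "(a, b, c) \<in> T0" for a b c
    using that v1(1) v2(1) v3(1) by (metis mem_view1_image mem_view2_image mem_view3_image)+
  have T1_T0: "\<exists>b'. (a, b', c) \<in> T0" and T1_T3: "\<exists>a'. (a', b, c) \<in> T3"
    if "(a, b, c) \<in> T1" for a b c
    using that v1(1) v3(2) by (metis mem_view1_image mem_view3_image)+
  have T2_T1: "\<exists>b'. (a, b', c) \<in> T1" if "(a, b, c) \<in> T2" for a b c
    using that v1(2) by (metis mem_view1_image)
  have T3_T2: "\<exists>c'. (a, b, c') \<in> T2" if "(a, b, c) \<in> T3" for a b c
    using that v2(2) by (metis mem_view2_image)
  have sep1: "(a, b', c) \<notin> T1" if "(a, b, c) \<in> T3" for a b b' c
    using that v1(3) by (metis IntI empty_iff mem_view1_image)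
  have sep2: "(a, b, c') \<notin> T2" if "(a, b, c) \<in> T0" for a b c c'
    using that v2(3) by (metis IntI empty_iff mem_view2_image)
  have sep3: "(a', b, c) \<notin> T1" if "(a, b, c) \<in> T0" for a a' b c
    using that v3(3) by (metis IntI empty_iff mem_view3_image)
  have second_W23: "\<exists>y' z'. (x, y', z') \<in> T1 \<and> y' \<noteq> y" if xyz: "(x, y, z) \<in> T1" for x y z
  proof -
    obtain y' where y': "(x, y', z) \<in> T0" using T1_T0[OF xyz] by blast
    then obtain z' where "(x, y', z') \<in> T1" using T0_T1(2) by blast
    moreover have "y' \<noteq> y" using sep3[OF y'] xyz by blast
    ultimately show ?thesis by blast
  qed
  obtain p b c where pbc: "(p, b, c) \<in> T1" using \<open>T1 \<noteq> {}\<close> by (metis ex_in_conv prod_cases3)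
  obtain q where qbc: "(q, b, c) \<in> T3" using T1_T3[OF pbc] by blast
  obtain b0 where pb0c: "(p, b0, c) \<in> T0" using T1_T0[OF pbc] by blast
  obtain r where rb0c: "(r, b0, c) \<in> T2" using T0_T1(3)[OF pb0c] by blast
  obtain br where rbrc: "(r, br, c) \<in> T1" using T2_T1[OF rb0c] by blast
  obtain c' where "(q, b, c') \<in> T2" using T3_T2[OF qbc] by blast
  then obtain bq cq where qbqcq: "(q, bq, cq) \<in> T1" using T2_T1 by blast
  have distinct_W12: "p \<noteq> q" "p \<noteq> r" "q \<noteq> r"
    using sep1[OF qbc] sep2[OF pb0c] pbc rb0c rbrc by blast+
  obtain y1 z1 where 1: "(p, y1, z1) \<in> T1" "y1 \<noteq> b" using second_W23[OF pbc] by blast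
  obtain y2 z2 where 2: "(q, y2, z2) \<in> T1" "y2 \<noteq> bq" using second_W23[OF qbqcq] by blast
  obtain y3 z3 where 3: "(r, y3, z3) \<in> T1" "y3 \<noteq> br" using second_W23[OF rbrc] by blast
  let ?six = "{(p, b, c), (p, y1, z1), (q, bq, cq), (q, y2, z2), (r, br, c), (r, y3, z3)}"
  have "card ?six = 6" using distinct_W12 1(2) 2(2) 3(2) by auto
  moreover have "?six \<subseteq> T1" using pbc qbqcq rbrc 1 2 3 by auto
  ultimately show ?thesis using card_mono[OF \<open>finite T1\<close>] by metis
qed

lemma share_support_eq_image: "share_support P psi x = psi x ` set_pmf P"
proof -
  have "measure_pmf.prob P {r. psi x r = w} > 0 \<longleftrightarrow> set_pmf P \<inter> {r. psi x r = w} \<noteq> {}" for w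
    using measure_pmf_zero_iff[of P "{r. psi x r = w}"] by (simp add: zero_less_measure_iff)
  then show ?thesis
    unfolding share_support_def by auto
qed

lemma share_support_nonempty: "share_support P psi x \<noteq> {}"
  by (simp add: share_support_eq_image set_pmf_not_empty)

lemma card_share_support_le:
  fixes P :: "'r::finite pmf"
  shows "card (share_support P psi x) \<le> CARD('r)"
proof -
  have "card (share_support P psi x) \<le> card (set_pmf P)"
    unfolding share_support_eq_image by (rule card_image_le) simp
  also have "\<dots> \<le> CARD('r)"
    by (rule card_mono) simp_all
  finally show ?thesis .
qed

lemma view_image_share_support:
  "f ` share_support P psi x = set_pmf (map_pmf (\<lambda>r. f (psi x r)) P)"
  by (simp add: share_support_eq_image image_image)

lemma is_3SS_view_images_eq:
  assumes "is_3SS S P psi" "x \<in> S" "x' \<in> S"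
  shows "bit1 x = bit1 x' \<Longrightarrow> view1 ` share_support P psi x = view1 ` share_support P psi x'"
    and "bit2 x = bit2 x' \<Longrightarrow> view2 ` share_support P psi x = view2 ` share_support P psi x'"
    and "bit3 x = bit3 x' \<Longrightarrow> view3 ` share_support P psi x = view3 ` share_support P psi x'"
proof -
  note privacy = assms(1)[unfolded is_3SS_def, THEN conjunct2, THEN conjunct2, THEN conjunct2]
  show "bit1 x = bit1 x' \<Longrightarrow> view1 ` share_support P psi x = view1 ` share_support P psi x'"
    unfolding view_image_share_support
    by (rule arg_cong[OF privacy[THEN conjunct1, rule_format, OF assms(2,3)]])
  show "bit2 x = bit2 x' \<Longrightarrow> view2 ` share_support P psi x = view2 ` share_support P psi x'"
    unfolding view_image_share_support
    by (rule arg_cong[OF privacy[THEN conjunct2, THEN conjunct1, rule_format, OF assms(2,3)]])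
  show "bit3 x = bit3 x' \<Longrightarrow> view3 ` share_support P psi x = view3 ` share_support P psi x'"
    unfolding view_image_share_support
    by (rule arg_cong[OF privacy[THEN conjunct2, THEN conjunct2, rule_format, OF assms(2,3)]])
qed

lemma image_disjoint_if_separated:
  assumes "\<forall>w\<in>A. g (f w) = a" "\<forall>w\<in>B. g (f w) = b" "a \<noteq> b"
  shows "f ` A \<inter> f ` B = {}"
  using assms by force

lemma is_3SS_view_images_disjoint:
  assumes "is_3SS S P psi" "x \<in> S" "x' \<in> S"
  shows "bit1 x \<noteq> bit1 x' \<Longrightarrow> view1 ` share_support P psi x \<inter> view1 ` share_support P psi x' = {}"
    and "bit2 x \<noteq> bit2 x' \<Longrightarrow> view2 ` share_support P psi x \<inter> view2 ` share_support P psi x' = {}"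
    and "bit3 x \<noteq> bit3 x' \<Longrightarrow> view3 ` share_support P psi x \<inter> view3 ` share_support P psi x' = {}"
proof -
  from assms(1) obtain phi1 phi2 phi3 where
    "\<forall>x\<in>S. \<forall>r\<in>set_pmf P. phi1 (view1 (psi x r)) = bit1 x"
    "\<forall>x\<in>S. \<forall>r\<in>set_pmf P. phi2 (view2 (psi x r)) = bit2 x"
    "\<forall>x\<in>S. \<forall>r\<in>set_pmf P. phi3 (view3 (psi x r)) = bit3 x"
    unfolding is_3SS_def by blast
  then have sep: "\<forall>w\<in>share_support P psi y. phi1 (view1 w) = bit1 y"
    "\<forall>w\<in>share_support P psi y. phi2 (view2 w) = bit2 y"
    "\<forall>w\<in>share_support P psi y. phi3 (view3 w) = bit3 y" if "y \<in> S" for y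
    using that by (auto simp: share_support_eq_image)
  show "bit1 x \<noteq> bit1 x' \<Longrightarrow> view1 ` share_support P psi x \<inter> view1 ` share_support P psi x' = {}"
    by (rule image_disjoint_if_separated[where g = phi1 and f = view1,
          OF sep(1)[OF assms(2)] sep(1)[OF assms(3)]])
  show "bit2 x \<noteq> bit2 x' \<Longrightarrow> view2 ` share_support P psi x \<inter> view2 ` share_support P psi x' = {}"
    by (rule image_disjoint_if_separated[where g = phi2 and f = view2,
          OF sep(2)[OF assms(2)] sep(2)[OF assms(3)]])
  show "bit3 x \<noteq> bit3 x' \<Longrightarrow> view3 ` share_support P psi x \<inter> view3 ` share_support P psi x' = {}"
    by (rule image_disjoint_if_separated[where g = phi3 and f = view3,
          OF sep(3)[OF assms(2)] sep(3)[OF assms(3)]])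
qed

theorem mainTheorem5:
  fixes P :: "'r::finite pmf"
    and psi :: "triple \<Rightarrow> 'r \<Rightarrow> ('w12::finite) \<times> ('w23::finite) \<times> ('w31::finite)"
  assumes "is_3SS S_ex P psi"
  shows "card (share_support P psi (False, False, True)) \<ge> 6
         \<and> log 2 (real CARD('r)) \<ge> log 2 6"
proof -
  note eq = is_3SS_view_images_eq[OF assms] and disj = is_3SS_view_images_disjoint[OF assms]
  have card_T001: "card (share_support P psi (False, False, True)) \<ge> 6"
    by (intro card_ge_6_of_view_constraints[of "share_support P psi (False, False, False)" _
          "share_support P psi (False, True, False)" "share_support P psi (True, True, True)"] eq disj)
      (simp_all add: S_ex_def bit1_def bit2_def bit3_def share_support_nonempty)
  then have "6 \<le> CARD('r)"
    using card_share_support_le[of P psi "(False, False, True)"] by linarith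
  then have "log 2 6 \<le> log 2 (real CARD('r))"
    by (intro log_mono) simp_all
  with card_T001 show ?thesis by blast
qed

end
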